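(* Let $\zeta=(\mathfrak k_1,\dots,\mathfrak k_p)$ be a flag of $\mathsf H$-subalgebras and $v\in\mathcal W^\Sigma(\zeta)$. Then for every $t>0$ and every $1\le q\le p$, the metric $\gamma_v(t)$ is a $\mathfrak k_q$-submersion metric.
   Context: $\mathsf G$ compact Lie group, $\mathsf H\subset\mathsf G$ closed, $M=\mathsf G/\mathsf H$ compact connected, $\mathsf G$ acting almost effectively; $Q$ an $\mathrm{Ad}(\mathsf G)$-invariant inner product on $\mathfrak g$, $\mathfrak m$ the $Q$-orthogonal complement of $\mathfrak h$, $Q_{\mathfrak m}=Q|_{\mathfrak m}$; invariant metrics = $\mathrm{Ad}(\mathsf H)$-invariant inner products on $\mathfrak m$. An $\mathsf H$-subalgebra is an $\mathrm{Ad}(\mathsf H)$-invariant Lie subalgebra $\mathfrak k$ with $\mathfrak h\subsetneq\mathfrak k\subsetneq\mathfrak g$; $\mathfrak m_{\mathfrak k}=\mathfrak k\cap\mathfrak m$, $\mathfrak m_{\mathfrak k}^\perp$ its $Q$-orthogonal complement in $\mathfrak m$; $\mathsf K$ denotes the subgroup generated by $\mathsf H$ and the connected Lie subgroup with Lie algebra $\mathfrak k$. An invariant metric $g$ is a $\mathfrak k$-submersion metric if $g(\mathfrak m_{\mathfrak k},\mathfrak m_{\mathfrak k}^\perp)=0$ and $g|_{\mathfrak m_{\mathfrak k}^\perp\times\mathfrak m_{\mathfrak k}^\perp}$ is $\mathrm{Ad}(\mathsf K)$-invariant. A flag of $\mathsf H$-subalgebras is $\zeta=(\mathfrak k_1,\dots,\mathfrak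 k_p)$ with $\mathfrak k_1\subsetneq\dots\subsetneq\mathfrak k_p$. $\mathscr F^{\mathsf G}$: ordered tuples $\varphi=(\mathfrak m_1,\dots,\mathfrak m_\ell)$ of mutually $Q$-orthogonal $\mathrm{Ad}(\mathsf H)$-irreducible invariant subspaces with $\mathfrak m=\bigoplus\mathfrak m_i$; $\mathfrak m_{I'}=\sum_{i\in I'}\mathfrak m_i$; $[I_1I_2I_3]_\varphi=\sum Q([e_\alpha,e_\beta],e_\gamma)^2$ over $e_\alpha\in\mathfrak m_{I_1},e_\beta\in\mathfrak m_{I_2},e_\gamma\in\mathfrak m_{I_3}$ in a $Q$-orthonormal $\varphi$-adapted basis. $\Sigma$: $Q_{\mathfrak m}$-symmetric endomorphisms $v$ of $\mathfrak m$ commuting with $\mathrm{Ad}(\mathsf H)|_{\mathfrak m}$, with $\mathrm{tr}\,v=0$, $\mathrm{tr}\,v^2=1$; $\gamma_v(t)=Q_{\mathfrak m}(e^{tv}\cdot,\cdot)$. A good decomposition for $v$ is $\varphi$ with $v|_{\mathfrak m_i}=v_i\mathrm{Id}$; $\hat v_1<\dots<\hat v_{\ell_v}$ are the distinct eigenvalues and $I^v_s(\varphi)=\{i:v_i=\hat v_s\}$. $\mathcal W^\Sigma(\zeta)$ is the set of $v\in\Sigma$ such that for every good decomposition $\varphi$ for $v$: (i) $\mathfrak k_1=\mathfrak h+\mathfrak m_{I^v_1(\varphi)}$ and $\mathfrak k_q=\mathfrak k_{q-1}+\mathfrak m_{I^v_q(\varphi)}$ for $2\le q\le p$; (ii) for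 every $1\le q\le p$ and all $i,j,k\in\{q,\dots,\ell_v\}$, $[I^v_i(\varphi)I^v_j(\varphi)I^v_k(\varphi)]_\varphi>0$ implies $\hat v_i-\hat v_j-\hat v_k+\hat v_q\le0$. *)

theory Defs
  imports "HOL-Analysis.Analysis"
begin

text \<open>Abstract Lie-algebraic model of the data of a compact homogeneous space G/H.
  The Lie algebra g of G is a Euclidean space type 'g whose inner product is the
  Ad(G)-invariant inner product Q; br is the Lie bracket; h is the Lie algebra of H;
  AdH is the group Ad(H) of linear automorphisms of g.  Indices are 0-based.\<close>

definition op_exp :: "('a::real_normed_vector \<Rightarrow> 'a) \<Rightarrow> 'a \<Rightarrow> 'a" where
  "op_exp L x = (\<Sum>n. (1 / fact n) *\<^sub>R (L ^^ n) x)"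

definition ad :: "('g \<Rightarrow> 'g \<Rightarrow> 'g) \<Rightarrow> 'g \<Rightarrow> 'g \<Rightarrow> 'g" where
  "ad br X = (\<lambda>Y. br X Y)"

definition lie_algebra_Q :: "('g::euclidean_space \<Rightarrow> 'g \<Rightarrow> 'g) \<Rightarrow> bool" where
  "lie_algebra_Q br \<longleftrightarrow>
     (\<forall>x. linear (br x)) \<and> (\<forall>y. linear (\<lambda>x. br x y)) \<and>
     (\<forall>x y. br x y = - br y x) \<and>
     (\<forall>x y z. br x (br y z) + br y (br z x) + br z (br x y) = 0) \<and>
     (\<forall>x y z. br x y \<bullet> z = x \<bullet> br y z)"

definition homog_data :: "('g::euclidean_space \<Rightarrow> 'g \<Rightarrow> 'g) \<Rightarrow> 'g set \<Rightarrow> ('g \<Rightarrow> 'g) set \<Rightarrow> bool" where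
  "homog_data br h AdH \<longleftrightarrow>
     lie_algebra_Q br \<and> subspace h \<and> (\<forall>x\<in>h. \<forall>y\<in>h. br x y \<in> h) \<and>
     id \<in> AdH \<and> (\<forall>A\<in>AdH. \<forall>B\<in>AdH. A \<circ> B \<in> AdH) \<and>
     (\<forall>A\<in>AdH. linear A \<and> bij A \<and> inv A \<in> AdH \<and> (\<forall>x y. A x \<bullet> A y = x \<bullet> y) \<and>
        (\<forall>x y. A (br x y) = br (A x) (A y)) \<and> A ` h = h) \<and>
     (\<forall>X\<in>h. \<forall>s::real. op_exp (\<lambda>Y. s *\<^sub>R br X Y) \<in> AdH)"

definition mspace :: "'g::euclidean_space set \<Rightarrow> 'g set" where
  "mspace h = {x. \<forall>y\<in>h. x \<bullet> y = 0}"

definition set_sum :: "'g::euclidean_space set \<Rightarrow> 'g set \<Rightarrow> 'g set" where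
  "set_sum A B = {x + y | x y. x \<in> A \<and> y \<in> B}"

definition H_subalgebra :: "('g::euclidean_space \<Rightarrow> 'g \<Rightarrow> 'g) \<Rightarrow> 'g set \<Rightarrow> ('g \<Rightarrow> 'g) set \<Rightarrow> 'g set \<Rightarrow> bool" where
  "H_subalgebra br h AdH k \<longleftrightarrow>
     subspace k \<and> (\<forall>x\<in>k. \<forall>y\<in>k. br x y \<in> k) \<and> (\<forall>A\<in>AdH. A ` k \<subseteq> k) \<and>
     h \<subset> k \<and> k \<subset> UNIV"

definition is_flag :: "('g::euclidean_space \<Rightarrow> 'g \<Rightarrow> 'g) \<Rightarrow> 'g set \<Rightarrow> ('g \<Rightarrow> 'g) set \<Rightarrow> 'g set list \<Rightarrow> bool" where
  "is_flag br h AdH ks \<longleftrightarrow>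
     ks \<noteq> [] \<and> (\<forall>q<length ks. H_subalgebra br h AdH (ks ! q)) \<and>
     (\<forall>q. q + 1 < length ks \<longrightarrow> ks ! q \<subset> ks ! (q + 1))"

definition m_of :: "'g::euclidean_space set \<Rightarrow> 'g set \<Rightarrow> 'g set" where
  "m_of h k = k \<inter> mspace h"

definition m_perp :: "'g::euclidean_space set \<Rightarrow> 'g set \<Rightarrow> 'g set" where
  "m_perp h k = {x \<in> mspace h. \<forall>y\<in>m_of h k. x \<bullet> y = 0}"

definition invariant_metric :: "'g::euclidean_space set \<Rightarrow> ('g \<Rightarrow> 'g) set \<Rightarrow> ('g \<Rightarrow> 'g \<Rightarrow> real) \<Rightarrow> bool" where
  "invariant_metric h AdH g \<longleftrightarrow>
     (\<forall>x\<in>mspace h. \<forall>y\<in>mspace h. \<forall>z\<in>mspace h. \<forall>a b.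
         g (a *\<^sub>R x + b *\<^sub>R y) z = a * g x z + b * g y z) \<and>
     (\<forall>x\<in>mspace h. \<forall>y\<in>mspace h. g x y = g y x) \<and>
     (\<forall>x\<in>mspace h. x \<noteq> 0 \<longrightarrow> g x x > 0) \<and>
     (\<forall>A\<in>AdH. \<forall>x\<in>mspace h. \<forall>y\<in>mspace h. g (A x) (A y) = g x y)"

inductive_set gen_grp :: "('a \<Rightarrow> 'a) set \<Rightarrow> ('a \<Rightarrow> 'a) set" for S where
  gen_id: "id \<in> gen_grp S"
| gen_mul: "a \<in> S \<Longrightarrow> B \<in> gen_grp S \<Longrightarrow> a \<circ> B \<in> gen_grp S"
| gen_inv: "a \<in> S \<Longrightarrow> B \<in> gen_grp S \<Longrightarrow> inv a \<circ> B \<in> gen_grp S"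

text \<open>Ad(K), K generated by H and the connected subgroup with Lie algebra k
  (the latter generated by exp(k), and Ad(exp X) = exp(ad X))\<close>
definition AdK :: "('g::euclidean_space \<Rightarrow> 'g \<Rightarrow> 'g) \<Rightarrow> ('g \<Rightarrow> 'g) set \<Rightarrow> 'g set \<Rightarrow> ('g \<Rightarrow> 'g) set" where
  "AdK br AdH k = gen_grp (AdH \<union> {op_exp (ad br X) | X. X \<in> k})"

definition submersion_metric ::
  "('g::euclidean_space \<Rightarrow> 'g \<Rightarrow> 'g) \<Rightarrow> 'g set \<Rightarrow> ('g \<Rightarrow> 'g) set \<Rightarrow> 'g set \<Rightarrow> ('g \<Rightarrow> 'g \<Rightarrow> real) \<Rightarrow> bool" where
  "submersion_metric br h AdH k g \<longleftrightarrow>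
     invariant_metric h AdH g \<and>
     (\<forall>x\<in>m_of h k. \<forall>y\<in>m_perp h k. g x y = 0) \<and>
     (\<forall>A\<in>AdK br AdH k. \<forall>y\<in>m_perp h k. \<forall>z\<in>m_perp h k. g (A y) (A z) = g y z)"

text \<open>Endomorphisms of m are represented as linear maps of g vanishing on h and preserving m.
  Their trace equals the trace of the induced map on g, computed in an orthonormal basis.\<close>
definition trace_op :: "('g::euclidean_space \<Rightarrow> 'g) \<Rightarrow> real" where
  "trace_op v = (\<Sum>b\<in>Basis. v b \<bullet> b)"

definition Sigma_set :: "'g::euclidean_space set \<Rightarrow> ('g \<Rightarrow> 'g) set \<Rightarrow> ('g \<Rightarrow> 'g) set" where
  "Sigma_set h AdH = {v. linear v \<and> (\<forall>x\<in>h. v x = 0) \<and> (\<forall>x\<in>mspace h. v x \<in> mspace h) \<and>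
      (\<forall>x\<in>mspace h. \<forall>y\<in>mspace h. v x \<bullet> y = x \<bullet> v y) \<and>
      (\<forall>A\<in>AdH. \<forall>x\<in>mspace h. v (A x) = A (v x)) \<and>
      trace_op v = 0 \<and> trace_op (v \<circ> v) = 1}"

definition gamma :: "('g::euclidean_space \<Rightarrow> 'g) \<Rightarrow> real \<Rightarrow> 'g \<Rightarrow> 'g \<Rightarrow> real" where
  "gamma v t = (\<lambda>x y. op_exp (\<lambda>z. t *\<^sub>R v z) x \<bullet> y)"

definition adH_irreducible :: "('g::euclidean_space \<Rightarrow> 'g) set \<Rightarrow> 'g set \<Rightarrow> bool" where
  "adH_irreducible AdH V \<longleftrightarrow> subspace V \<and> V \<noteq> {0} \<and> (\<forall>A\<in>AdH. A ` V \<subseteq> V) \<and>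
     (\<forall>W. subspace W \<and> W \<subseteq> V \<and> (\<forall>A\<in>AdH. A ` W \<subseteq> W) \<longrightarrow> W = {0} \<or> W = V)"

text \<open>elements of F^G (0-based list of subspaces)\<close>
definition decomp :: "'g::euclidean_space set \<Rightarrow> ('g \<Rightarrow> 'g) set \<Rightarrow> 'g set list \<Rightarrow> bool" where
  "decomp h AdH ms \<longleftrightarrow>
     (\<forall>i<length ms. adH_irreducible AdH (ms ! i)) \<and>
     (\<forall>i<length ms. \<forall>j<length ms. i \<noteq> j \<longrightarrow> (\<forall>x\<in>ms ! i. \<forall>y\<in>ms ! j. x \<bullet> y = 0)) \<and>
     span (\<Union> (set ms)) = mspace h"

definition msum :: "'g::euclidean_space set list \<Rightarrow> nat set \<Rightarrow> 'g set" where
  "msum ms I = span (\<Union>i\<in>I \<inter> {..<length ms}. ms ! i)"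

definition good_decomp :: "'g::euclidean_space set \<Rightarrow> ('g \<Rightarrow> 'g) set \<Rightarrow> ('g \<Rightarrow> 'g) \<Rightarrow> 'g set list \<Rightarrow> bool" where
  "good_decomp h AdH v ms \<longleftrightarrow> decomp h AdH ms \<and>
     (\<forall>i<length ms. \<exists>c. \<forall>x\<in>ms ! i. v x = c *\<^sub>R x)"

definition coef :: "('g::euclidean_space \<Rightarrow> 'g) \<Rightarrow> 'g set list \<Rightarrow> nat \<Rightarrow> real" where
  "coef v ms i = (SOME c. \<forall>x\<in>ms ! i. v x = c *\<^sub>R x)"

definition eigvals :: "'g::euclidean_space set \<Rightarrow> ('g \<Rightarrow> 'g) \<Rightarrow> real list" where
  "eigvals h v = sorted_list_of_set {c. \<exists>x\<in>mspace h. x \<noteq> 0 \<and> v x = c *\<^sub>R x}"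

definition Iset :: "'g::euclidean_space set \<Rightarrow> ('g \<Rightarrow> 'g) \<Rightarrow> 'g set list \<Rightarrow> nat \<Rightarrow> nat set" where
  "Iset h v ms s = {i. i < length ms \<and> coef v ms i = eigvals h v ! s}"

definition adapted_onb :: "'g::euclidean_space set list \<Rightarrow> (nat \<Rightarrow> 'g set) \<Rightarrow> bool" where
  "adapted_onb ms B \<longleftrightarrow> (\<forall>i<length ms. finite (B i) \<and> B i \<subseteq> ms ! i \<and> span (B i) = ms ! i \<and>
      pairwise orthogonal (B i) \<and> (\<forall>b\<in>B i. norm b = 1))"

text \<open>[I1 I2 I3] computed in a Q-orthonormal adapted basis (value is basis independent)\<close>
definition bracket_sum :: "('g::euclidean_space \<Rightarrow> 'g \<Rightarrow> 'g) \<Rightarrow> 'g set list \<Rightarrow> nat set \<Rightarrow> nat set \<Rightarrow> nat set \<Rightarrow> real" where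
  "bracket_sum br ms I1 I2 I3 = (let B = (SOME B. adapted_onb ms B) in
     (\<Sum>i\<in>I1 \<inter> {..<length ms}. \<Sum>j\<in>I2 \<inter> {..<length ms}. \<Sum>k\<in>I3 \<inter> {..<length ms}.
        \<Sum>a\<in>B i. \<Sum>b\<in>B j. \<Sum>c\<in>B k. (br a b \<bullet> c)\<^sup>2))"

definition W_Sigma :: "('g::euclidean_space \<Rightarrow> 'g \<Rightarrow> 'g) \<Rightarrow> 'g set \<Rightarrow> ('g \<Rightarrow> 'g) set \<Rightarrow> 'g set list \<Rightarrow> ('g \<Rightarrow> 'g) set" where
  "W_Sigma br h AdH ks = {v \<in> Sigma_set h AdH. length ks \<le> length (eigvals h v) \<and>
     (\<forall>ms. good_decomp h AdH v ms \<longrightarrow>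
        (ks ! 0 = set_sum h (msum ms (Iset h v ms 0)) \<and>
         (\<forall>q. 1 \<le> q \<and> q < length ks \<longrightarrow> ks ! q = set_sum (ks ! (q - 1)) (msum ms (Iset h v ms q)))) \<and>
        (\<forall>q<length ks. \<forall>i j k. q \<le> i \<and> i < length (eigvals h v) \<and> q \<le> j \<and> j < length (eigvals h v) \<and>
            q \<le> k \<and> k < length (eigvals h v) \<longrightarrow>
            bracket_sum br ms (Iset h v ms i) (Iset h v ms j) (Iset h v ms k) > 0 \<longrightarrow>
            eigvals h v ! i - eigvals h v ! j - eigvals h v ! k + eigvals h v ! q \<le> 0))}"

end

theory Submission
  imports Defs
begin

text \<open>Since \<open>v\<close> is symmetric and commutes with
  \<open>Ad(H)\<close>, \<open>exp(t v)\<close> is a positive \<open>Ad(H)\<close>-equivariant operator, so \<open>gamma v t\<close> is an invariant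
  metric. Condition (i) of \<open>W_Sigma\<close> says that \<open>k_q\<close> is spanned by \<open>h\<close> and the blocks of a
  good decomposition on which \<open>v\<close> takes one of its \<open>q + 1\<close> smallest eigenvalues; hence \<open>v\<close>, and
  with it \<open>exp(t v)\<close>, preserves \<open>k_q\<close> and its orthogonal complement, which gives the
  orthogonality part of a submersion metric. For the \<open>Ad(K)\<close>-invariance it suffices that \<open>v\<close>
  commutes with \<open>ad X\<close> on the orthogonal complement of \<open>k_q\<close> for every \<open>X \<in> k_q\<close>, since then
  \<open>exp(ad X)\<close> commutes with \<open>exp(t v)\<close> there. For \<open>X \<in> h\<close> this is the derivative of the
  \<open>Ad(H)\<close>-equivariance of \<open>v\<close>. For \<open>X\<close> in a block of eigenvalue index \<open>s \<le> q\<close>, condition (ii),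
  applied to the index triples \<open>(i', i, s)\<close> and \<open>(i, i', s)\<close>, shows that \<open>[X, Z]\<close> is an
  eigenvector of \<open>v\<close> with the eigenvalue of \<open>Z\<close> whenever \<open>Z\<close> lies in a block of index \<open>i > q\<close>.\<close>

section \<open>The operator exponential\<close>

text \<open>A copy of \<open>'a \<Rightarrow>\<^sub>L 'a\<close>: the library's \<open>blinfun\<close> has two independent type arguments and
  therefore cannot be instantiated as a Banach algebra, which is needed for \<open>exp\<close>.\<close>

typedef (overloaded) ('a::euclidean_space) endo = "UNIV :: ('a \<Rightarrow>\<^sub>L 'a) set" by simp

setup_lifting type_definition_endo

instantiation endo :: (euclidean_space) real_normed_vector
begin
lift_definition norm_endo :: "'a endo \<Rightarrow> real" is norm .
lift_definition minus_endo :: "'a endo \<Rightarrow> 'a endo \<Rightarrow> 'a endo" is "(-)" .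
lift_definition plus_endo :: "'a endo \<Rightarrow> 'a endo \<Rightarrow> 'a endo" is "(+)" .
lift_definition uminus_endo :: "'a endo \<Rightarrow> 'a endo" is "uminus" .
lift_definition zero_endo :: "'a endo" is 0 .
lift_definition scaleR_endo :: "real \<Rightarrow> 'a endo \<Rightarrow> 'a endo" is scaleR .
definition dist_endo :: "'a endo \<Rightarrow> 'a endo \<Rightarrow> real" where "dist_endo a b = norm (a - b)"
definition sgn_endo :: "'a endo \<Rightarrow> 'a endo" where "sgn_endo x = scaleR (inverse (norm x)) x"
definition "(uniformity :: ('a endo \<times> 'a endo) filter) = (INF e\<in>{0 <..}. principal {(x, y). dist x y < e})"
definition open_endo :: "'a endo set \<Rightarrow> bool"
  where "open_endo S = (\<forall>x\<in>S. \<forall>\<^sub>F (x', y) in uniformity. x' = x \<longrightarrow> y \<in> S)"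
instance
  apply standard
  unfolding dist_endo_def open_endo_def sgn_endo_def uniformity_endo_def
  apply (rule refl | (transfer, force simp: norm_triangle_ineq algebra_simps))+
  done
end

instantiation endo :: (euclidean_space) real_normed_algebra_1
begin
lift_definition times_endo :: "'a endo \<Rightarrow> 'a endo \<Rightarrow> 'a endo" is blinfun_compose .
lift_definition one_endo :: "'a endo" is id_blinfun .
instance
proof
  show "(0::'a endo) \<noteq> 1"
    by transfer (metis norm_blinfun_id norm_zero zero_neq_one)
  show "norm (1::'a endo) = 1"
    by transfer simp
  show "norm (S * T) \<le> norm S * norm T" for S T :: "'a endo"
    by transfer (rule norm_blinfun_compose)
qed (transfer, rule blinfun_eqI, simp add: blinfun.bilinear_simps)+
end

lemma dist_Rep_endo: "dist (Rep_endo S) (Rep_endo T) = dist S T"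
  unfolding dist_endo_def dist_norm by transfer simp

instance endo :: (euclidean_space) banach
proof
  fix X :: "nat \<Rightarrow> 'a endo"
  assume "Cauchy X"
  then have "Cauchy (\<lambda>n. Rep_endo (X n))"
    unfolding Cauchy_def dist_Rep_endo .
  then obtain L where "(\<lambda>n. Rep_endo (X n)) \<longlonglongrightarrow> L"
    using convergent_eq_Cauchy convergent_def by blast
  then have "X \<longlonglongrightarrow> Abs_endo L"
    unfolding lim_sequentially dist_Rep_endo[symmetric] by (simp add: Abs_endo_inverse)
  then show "convergent X"
    unfolding convergent_def by blast
qed

definition endo_apply :: "'a::euclidean_space endo \<Rightarrow> 'a \<Rightarrow> 'a" where
  "endo_apply T = blinfun_apply (Rep_endo T)"

definition endo_of :: "('a::euclidean_space \<Rightarrow> 'a) \<Rightarrow> 'a endo" where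
  "endo_of L = Abs_endo (Blinfun L)"

lemma endo_apply_mult: "endo_apply (S * T) x = endo_apply S (endo_apply T x)"
  unfolding endo_apply_def by transfer simp

lemma endo_apply_one: "endo_apply 1 x = x"
  unfolding endo_apply_def by transfer simp

lemma endo_apply_power: "endo_apply (T ^ n) x = (endo_apply T ^^ n) x"
  by (induction n) (auto simp: endo_apply_mult endo_apply_one)

lemma endo_apply_endo_of: "linear L \<Longrightarrow> endo_apply (endo_of L) = L"
  unfolding endo_apply_def endo_of_def
  by (simp add: Abs_endo_inverse bounded_linear_Blinfun_apply linear_conv_bounded_linear)

lemma endo_eqI: "(\<And>x. endo_apply S x = endo_apply T x) \<Longrightarrow> S = T"
  unfolding endo_apply_def using Rep_endo_inject blinfun_eqI by blast

lemma endo_apply_scaleR: "endo_apply (c *\<^sub>R T) x = c *\<^sub>R endo_apply T x"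
  unfolding endo_apply_def by transfer (simp add: blinfun.scaleR_left)

lemma endo_apply_uminus: "endo_apply (- T) x = - endo_apply T x"
  unfolding endo_apply_def by transfer (simp add: blinfun.minus_left)

lemma bounded_linear_endo_apply_left: "bounded_linear (\<lambda>T. endo_apply T x)"
proof (rule bounded_linear_intro[where K="norm x"])
  fix S T :: "'a endo" and r :: real
  show "endo_apply (S + T) x = endo_apply S x + endo_apply T x"
    unfolding endo_apply_def plus_endo.rep_eq by (rule blinfun.add_left)
  show "endo_apply (r *\<^sub>R T) x = r *\<^sub>R endo_apply T x"
    by (rule endo_apply_scaleR)
  have "norm (Rep_endo T) = norm T"
    by transfer simp
  then show "norm (endo_apply T x) \<le> norm T * norm x"
    unfolding endo_apply_def by (metis norm_blinfun)
qed

lemma linear_endo_apply: "linear (endo_apply T)"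
  unfolding endo_apply_def by (rule bounded_linear.linear[OF blinfun.bounded_linear_right])

lemma endo_of_scaleR: "linear L \<Longrightarrow> endo_of (\<lambda>x. c *\<^sub>R L x) = c *\<^sub>R endo_of L"
  by (rule endo_eqI) (simp add: endo_apply_endo_of endo_apply_scaleR linear_compose_scale_right)

lemma endo_of_uminus: "linear L \<Longrightarrow> endo_of (\<lambda>x. - L x) = - endo_of L"
  by (rule endo_eqI) (simp add: endo_apply_endo_of endo_apply_uminus linear_compose_neg)

lemma exp_scaleR_commute_imp_commute:
  fixes T W :: "'a::{banach, real_normed_algebra_1}"
  assumes "\<And>s. exp (s *\<^sub>R T) * W = W * exp (s *\<^sub>R T)"
  shows "T * W = W * T"
proof -
  have "((\<lambda>s. exp (s *\<^sub>R T) * W) has_vector_derivative (exp (0 *\<^sub>R T) * T) * W) (at 0)"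
    by (intro has_vector_derivative_mult_left exp_scaleR_has_vector_derivative_right)
  moreover have "((\<lambda>s. exp (s *\<^sub>R T) * W) has_vector_derivative W * (exp (0 *\<^sub>R T) * T)) (at 0)"
    unfolding assms by (intro has_vector_derivative_mult_right exp_scaleR_has_vector_derivative_right)
  ultimately show ?thesis
    using vector_derivative_unique_at by fastforce
qed

lemma op_exp_sums_exp:
  fixes L :: "'a::euclidean_space \<Rightarrow> 'a"
  assumes "linear L"
  shows "(\<lambda>n. (1 / fact n) *\<^sub>R (L ^^ n) x) sums endo_apply (exp (endo_of L)) x"
proof -
  have "(\<lambda>n. endo_of L ^ n /\<^sub>R fact n) sums exp (endo_of L)"
    unfolding exp_def by (rule summable_exp_generic [THEN summable_sums])
  from bounded_linear.sums[OF bounded_linear_endo_apply_left this, of x] show ?thesis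
    by (simp add: endo_apply_scaleR endo_apply_power endo_apply_endo_of assms divide_inverse_commute)
qed

lemma op_exp_eq_exp:
  fixes L :: "'a::euclidean_space \<Rightarrow> 'a"
  assumes "linear L"
  shows "op_exp L = endo_apply (exp (endo_of L))"
  unfolding op_exp_def using sums_unique[OF op_exp_sums_exp[OF assms]] by auto

lemma op_exp_sums:
  fixes L :: "'a::euclidean_space \<Rightarrow> 'a"
  assumes "linear L"
  shows "(\<lambda>n. (1 / fact n) *\<^sub>R (L ^^ n) x) sums op_exp L x"
  using op_exp_sums_exp[OF assms] by (simp add: op_exp_eq_exp[OF assms])

lemma linear_op_exp:
  fixes L :: "'a::euclidean_space \<Rightarrow> 'a"
  shows "linear L \<Longrightarrow> linear (op_exp L)"
  by (simp add: op_exp_eq_exp linear_endo_apply)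

lemma op_exp_uminus_cancel:
  fixes L :: "'a::euclidean_space \<Rightarrow> 'a"
  assumes "linear L"
  shows "op_exp (\<lambda>x. - L x) (op_exp L x) = x"
proof -
  have "op_exp (\<lambda>x. - L x) (op_exp L x) = endo_apply (exp (- endo_of L) * exp (endo_of L)) x"
    using assms linear_compose_neg[OF assms]
    by (simp add: op_exp_eq_exp endo_of_uminus endo_apply_mult)
  also have "exp (- endo_of L) * exp (endo_of L) = 1"
    using exp_minus_inverse[of "- endo_of L"] by simp
  finally show ?thesis
    by (simp add: endo_apply_one)
qed

lemma op_exp_half_square:
  fixes L :: "'a::euclidean_space \<Rightarrow> 'a"
  assumes "linear L"
  shows "op_exp L x = op_exp (\<lambda>y. (1/2) *\<^sub>R L y) (op_exp (\<lambda>y. (1/2) *\<^sub>R L y) x)"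
proof -
  have half: "endo_of L = (1/2) *\<^sub>R endo_of L + (1/2) *\<^sub>R endo_of L"
    by (simp flip: scaleR_add_left)
  have "exp (endo_of L) = exp ((1/2) *\<^sub>R endo_of L) * exp ((1/2) *\<^sub>R endo_of L)"
    by (subst half, rule exp_add_commuting) simp
  then show ?thesis
    using assms linear_compose_scale_right[OF assms]
    by (simp add: op_exp_eq_exp endo_of_scaleR endo_apply_mult)
qed

lemma funpow_adjoint:
  fixes L L' :: "'a::real_inner \<Rightarrow> 'a"
  assumes "\<And>x y. L x \<bullet> y = x \<bullet> L' y"
  shows "(L ^^ n) x \<bullet> y = x \<bullet> (L' ^^ n) y"
proof (induction n arbitrary: y)
  case (Suc n)
  have "(L ^^ Suc n) x \<bullet> y = (L ^^ n) x \<bullet> L' y"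
    by (simp add: assms)
  also have "\<dots> = x \<bullet> (L' ^^ Suc n) y"
    by (simp add: Suc funpow_Suc_right del: funpow.simps)
  finally show ?case .
qed simp

lemma op_exp_adjoint:
  fixes L L' :: "'a::euclidean_space \<Rightarrow> 'a"
  assumes "linear L" "linear L'" "\<And>x y. L x \<bullet> y = x \<bullet> L' y"
  shows "op_exp L x \<bullet> y = x \<bullet> op_exp L' y"
proof -
  have "(\<lambda>n. ((1 / fact n) *\<^sub>R (L ^^ n) x) \<bullet> y) sums (op_exp L x \<bullet> y)"
    by (rule bounded_linear.sums[OF bounded_linear_inner_left op_exp_sums[OF assms(1)]])
  moreover have "(\<lambda>n. x \<bullet> ((1 / fact n) *\<^sub>R (L' ^^ n) y)) sums (x \<bullet> op_exp L' y)"
    by (rule bounded_linear.sums[OF bounded_linear_inner_right op_exp_sums[OF assms(2)]])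
  moreover have "(\<lambda>n. ((1 / fact n) *\<^sub>R (L ^^ n) x) \<bullet> y) = (\<lambda>n. x \<bullet> ((1 / fact n) *\<^sub>R (L' ^^ n) y))"
    using funpow_adjoint[OF assms(3)] by simp
  ultimately show ?thesis
    using sums_unique2 by metis
qed

lemma funpow_commute_on:
  assumes "\<forall>x\<in>S. L x \<in> S" "\<forall>x\<in>S. F (L x) = L (F x)" "x \<in> S"
  shows "(L ^^ n) x \<in> S \<and> F ((L ^^ n) x) = (L ^^ n) (F x)"
proof (induction n)
  case (Suc n)
  then show ?case
    using assms by simp
qed (use assms in simp)

lemma op_exp_commute_on:
  fixes L F :: "'a::euclidean_space \<Rightarrow> 'a"
  assumes "linear L" "linear F" "\<forall>x\<in>S. L x \<in> S" "\<forall>x\<in>S. F (L x) = L (F x)" "x \<in> S"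
  shows "F (op_exp L x) = op_exp L (F x)"
proof -
  have "(\<lambda>n. F ((1 / fact n) *\<^sub>R (L ^^ n) x)) sums F (op_exp L x)"
    using assms(2) by (intro bounded_linear.sums[OF _ op_exp_sums[OF assms(1)]])
      (simp add: linear_conv_bounded_linear)
  moreover have "(\<lambda>n. F ((1 / fact n) *\<^sub>R (L ^^ n) x)) = (\<lambda>n. (1 / fact n) *\<^sub>R (L ^^ n) (F x))"
    using funpow_commute_on[OF assms(3-5)] linear_scale[OF assms(2)] by simp
  ultimately show ?thesis
    using op_exp_sums[OF assms(1)] sums_unique2 by metis
qed

lemma op_exp_in_subspace:
  fixes L :: "'a::euclidean_space \<Rightarrow> 'a"
  assumes "linear L" "subspace S" "\<forall>x\<in>S. L x \<in> S" "x \<in> S"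
  shows "op_exp L x \<in> S"
proof -
  have "(L ^^ n) x \<in> S" for n
    using funpow_commute_on[OF assms(3) _ assms(4), of id] by simp
  then have "(\<Sum>n<N. (1 / fact n) *\<^sub>R (L ^^ n) x) \<in> S" for N
    by (intro subspace_sum[OF assms(2)] subspace_scale[OF assms(2)])
  moreover have "(\<lambda>N. \<Sum>n<N. (1 / fact n) *\<^sub>R (L ^^ n) x) \<longlonglongrightarrow> op_exp L x"
    using op_exp_sums[OF assms(1)] unfolding sums_def .
  ultimately show ?thesis
    using closed_sequentially[OF closed_subspace[OF assms(2)],
        of "\<lambda>N. \<Sum>n<N. (1 / fact n) *\<^sub>R (L ^^ n) x"] by blast
qed

lemma commute_of_op_exp_commute:
  fixes L V :: "'a::euclidean_space \<Rightarrow> 'a"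
  assumes "linear L" "linear V"
    and "\<And>s x. V (op_exp (\<lambda>y. s *\<^sub>R L y) x) = op_exp (\<lambda>y. s *\<^sub>R L y) (V x)"
  shows "V (L x) = L (V x)"
proof -
  have "exp (s *\<^sub>R endo_of L) * endo_of V = endo_of V * exp (s *\<^sub>R endo_of L)" for s
  proof (rule endo_eqI)
    fix x
    have "linear (\<lambda>y. s *\<^sub>R L y)"
      using assms(1) by (simp add: linear_compose_scale_right)
    from op_exp_eq_exp[OF this] show "endo_apply (exp (s *\<^sub>R endo_of L) * endo_of V) x
        = endo_apply (endo_of V * exp (s *\<^sub>R endo_of L)) x"
      using assms(3)[of s] endo_of_scaleR[OF assms(1)]
      by (simp add: endo_apply_mult endo_apply_endo_of assms(2))
  qed
  then have "endo_of L * endo_of V = endo_of V * endo_of L"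
    by (rule exp_scaleR_commute_imp_commute)
  then have "endo_apply (endo_of L * endo_of V) x = endo_apply (endo_of V * endo_of L) x"
    by simp
  then show ?thesis
    by (simp add: endo_apply_mult endo_apply_endo_of assms(1,2))
qed

section \<open>Spectral decomposition of equivariant symmetric operators\<close>

lemma linear_le_quadratic_imp_zero:
  fixes B D :: real
  assumes "D \<ge> 0" "\<And>s. 2 * s * B \<le> s\<^sup>2 * D"
  shows "B = 0"
proof -
  define e where "e = 1 / (D + 1)"
  have e: "e > 0" "e * D \<le> 1"
    using assms(1) by (auto simp: e_def field_simps)
  have "2 * (e * B) * B \<le> (e * B)\<^sup>2 * D"
    by (rule assms(2))
  then have "e * (2 * B\<^sup>2) \<le> e * (e * D * B\<^sup>2)"
    by (simp add: power2_eq_square algebra_simps)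
  then have "2 * B\<^sup>2 \<le> e * D * B\<^sup>2"
    using e by (simp add: mult_le_cancel_left_pos)
  also have "\<dots> \<le> B\<^sup>2"
    using e mult_right_mono[of "e * D" 1 "B\<^sup>2"] by simp
  finally show ?thesis
    by simp
qed

text \<open>The maximum of the Rayleigh quotient on the unit sphere of \<open>U\<close> is attained at an
  eigenvector: perturbing the maximiser \<open>x0\<close> along \<open>y\<close> gives the linear-versus-quadratic
  inequality above for the defect \<open>v x0 \<bullet> y - c * (x0 \<bullet> y)\<close>.\<close>

lemma symmetric_operator_has_eigenvector:
  fixes v :: "'a::euclidean_space \<Rightarrow> 'a"
  assumes lv: "linear v" and sym: "\<And>x y. v x \<bullet> y = x \<bullet> v y"
    and U: "subspace U" "U \<noteq> {0}" "\<forall>x\<in>U. v x \<in> U"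
  shows "\<exists>x c. x \<in> U \<and> x \<noteq> 0 \<and> v x = c *\<^sub>R x"
proof -
  let ?K = "U \<inter> sphere 0 1"
  have "compact ?K"
    using closed_subspace[OF U(1)] compact_sphere closed_Int_compact by blast
  moreover obtain u where u: "u \<in> U" "u \<noteq> 0"
    using U(1,2) subspace_0 by blast
  then have "u /\<^sub>R norm u \<in> ?K"
    using U(1) by (simp add: subspace_scale)
  moreover have "continuous_on ?K (\<lambda>x. v x \<bullet> x)"
    using lv by (intro continuous_intros linear_continuous_on) (simp add: linear_conv_bounded_linear)
  ultimately obtain x0 where x0: "x0 \<in> ?K" "\<And>y. y \<in> ?K \<Longrightarrow> v y \<bullet> y \<le> v x0 \<bullet> x0"
    using continuous_attains_sup[of ?K "\<lambda>x. v x \<bullet> x"] by blast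
  define c where "c = v x0 \<bullet> x0"
  have x0U: "x0 \<in> U" and x0x0: "x0 \<bullet> x0 = 1"
    using x0(1) by (auto simp: dot_square_norm)
  have bound: "v z \<bullet> z \<le> c * (z \<bullet> z)" if "z \<in> U" for z
  proof (cases "z = 0")
    case False
    have "z /\<^sub>R norm z \<in> ?K"
      using that False U(1) by (simp add: subspace_scale)
    then have "v (z /\<^sub>R norm z) \<bullet> (z /\<^sub>R norm z) \<le> c"
      using x0(2) c_def by blast
    moreover have "v (z /\<^sub>R norm z) \<bullet> (z /\<^sub>R norm z) = (v z \<bullet> z) / (norm z)\<^sup>2"
      by (simp add: linear_scale[OF lv] power2_eq_square field_simps)
    ultimately show ?thesis
      using False by (simp add: pos_divide_le_eq dot_square_norm)
  qed (simp add: linear_0[OF lv])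
  have defect: "v x0 \<bullet> y - c * (x0 \<bullet> y) = 0" if y: "y \<in> U" for y
  proof (rule linear_le_quadratic_imp_zero)
    show "c * (y \<bullet> y) - v y \<bullet> y \<ge> 0"
      using bound[OF y] by simp
    fix s :: real
    have "x0 + s *\<^sub>R y \<in> U"
      using x0U y U(1) by (simp add: subspace_add subspace_scale)
    from bound[OF this] have "c + 2 * s * (v x0 \<bullet> y) + s\<^sup>2 * (v y \<bullet> y)
        \<le> c * (1 + 2 * s * (x0 \<bullet> y) + s\<^sup>2 * (y \<bullet> y))"
      using sym[of y x0] x0x0
      by (simp add: linear_add[OF lv] linear_scale[OF lv] inner_add_left inner_add_right c_def
          power2_eq_square inner_commute algebra_simps)
    then show "2 * s * (v x0 \<bullet> y - c * (x0 \<bullet> y)) \<le> s\<^sup>2 * (c * (y \<bullet> y) - v y \<bullet> y)"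
      by (simp add: algebra_simps)
  qed
  have "v x0 - c *\<^sub>R x0 \<in> U"
    using x0U U by (simp add: subspace_diff subspace_scale)
  from defect[OF this] have "(v x0 - c *\<^sub>R x0) \<bullet> (v x0 - c *\<^sub>R x0) = 0"
    by (simp add: inner_diff_left)
  then have "v x0 = c *\<^sub>R x0"
    by simp
  moreover have "x0 \<noteq> 0"
    using x0x0 by auto
  ultimately show ?thesis
    using x0U by blast
qed

lemma span_Un_orthogonal_complement:
  fixes U W :: "'a::euclidean_space set"
  assumes "subspace U" "subspace W" "U \<subseteq> W"
  shows "span (U \<union> {x\<in>W. \<forall>u\<in>U. x \<bullet> u = 0}) = W"
proof
  show "span (U \<union> {x\<in>W. \<forall>u\<in>U. x \<bullet> u = 0}) \<subseteq> W"
    using assms by (intro span_minimal) auto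
  show "W \<subseteq> span (U \<union> {x\<in>W. \<forall>u\<in>U. x \<bullet> u = 0})"
  proof
    fix x assume x: "x \<in> W"
    obtain y z where yz: "y \<in> span U" "\<And>w. w \<in> span U \<Longrightarrow> orthogonal z w" "x = y + z"
      using orthogonal_subspace_decomp_exists[of U x] by blast
    have y: "y \<in> U"
      using yz(1) assms(1) span_eq_iff by blast
    then have "z \<in> W"
      using x assms(2,3) yz(3) by (metis add_diff_cancel_left' subsetD subspace_diff)
    then have "z \<in> {x\<in>W. \<forall>u\<in>U. x \<bullet> u = 0}"
      using yz(2) span_base by (auto simp: orthogonal_def)
    with y show "x \<in> span (U \<union> {x\<in>W. \<forall>u\<in>U. x \<bullet> u = 0})"
      using yz(3) by (meson UnCI span_add span_base)
  qed
qed

lemma set_sum_span: "set_sum (span A) (span B) = span (A \<union> B)"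
  unfolding set_sum_def span_Un by simp

definition orthogonal_blocks :: "'a::real_inner set list \<Rightarrow> bool" where
  "orthogonal_blocks ms \<longleftrightarrow>
     (\<forall>i<length ms. \<forall>j<length ms. i \<noteq> j \<longrightarrow> (\<forall>x\<in>ms ! i. \<forall>y\<in>ms ! j. x \<bullet> y = 0))"

lemma orthogonal_blocks_Cons:
  assumes "orthogonal_blocks ms" "\<forall>V\<in>set ms. \<forall>x\<in>U. \<forall>y\<in>V. x \<bullet> y = 0"
  shows "orthogonal_blocks (U # ms)"
  unfolding orthogonal_blocks_def
proof (intro allI impI ballI)
  have U_orth: "x \<bullet> y = 0" "y \<bullet> x = 0" if "j < length ms" "x \<in> U" "y \<in> ms ! j" for j x y
    using assms(2) nth_mem[OF that(1)] that(2,3) by (auto simp: inner_commute)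
  fix i j x y
  assume "i < length (U # ms)" "j < length (U # ms)" "i \<noteq> j" "x \<in> (U # ms) ! i" "y \<in> (U # ms) ! j"
  then show "x \<bullet> y = 0"
    using assms(1) U_orth unfolding orthogonal_blocks_def
    by (cases i; cases j) auto
qed

definition eigen_decomposition ::
  "('a::euclidean_space \<Rightarrow> 'a) set \<Rightarrow> ('a \<Rightarrow> 'a) \<Rightarrow> 'a set \<Rightarrow> 'a set list \<Rightarrow> bool" where
  "eigen_decomposition G v W ms \<longleftrightarrow>
     (\<forall>V\<in>set ms. adH_irreducible G V \<and> (\<exists>c. \<forall>x\<in>V. v x = c *\<^sub>R x)) \<and>
     orthogonal_blocks ms \<and> span (\<Union> (set ms)) = W"

lemma eigen_decomposition_Cons:
  fixes W U :: "'a::euclidean_space set"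
  assumes W: "subspace W" and U: "U \<subseteq> W" "adH_irreducible G U" "\<forall>x\<in>U. v x = c *\<^sub>R x"
    and ms: "eigen_decomposition G v {x\<in>W. \<forall>u\<in>U. x \<bullet> u = 0} ms"
  shows "eigen_decomposition G v W (U # ms)"
  unfolding eigen_decomposition_def
proof (intro conjI)
  define W' where "W' = {x\<in>W. \<forall>u\<in>U. x \<bullet> u = 0}"
  have sU: "subspace U"
    using U(2) unfolding adH_irreducible_def by blast
  show "\<forall>V\<in>set (U # ms). adH_irreducible G V \<and> (\<exists>c. \<forall>x\<in>V. v x = c *\<^sub>R x)"
    using U ms unfolding eigen_decomposition_def by auto
  have span_ms: "span (\<Union> (set ms)) = W'"
    using ms unfolding eigen_decomposition_def W'_def by (elim conjE)
  then have ms_W': "\<Union> (set ms) \<subseteq> W'"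
    using span_superset[of "\<Union> (set ms)"] by simp
  have "y \<bullet> x = 0" if "V \<in> set ms" "x \<in> U" "y \<in> V" for V x y
    using ms_W' that unfolding W'_def by blast
  then have "\<forall>V\<in>set ms. \<forall>x\<in>U. \<forall>y\<in>V. x \<bullet> y = 0"
    by (simp add: inner_commute)
  then show "orthogonal_blocks (U # ms)"
    using ms unfolding eigen_decomposition_def by (intro orthogonal_blocks_Cons) auto
  have "U \<union> W' \<subseteq> span (U \<union> \<Union> (set ms))"
    using span_ms span_superset[of "U \<union> \<Union> (set ms)"] span_mono[of "\<Union> (set ms)" "U \<union> \<Union> (set ms)"]
    by blast
  moreover have "U \<union> \<Union> (set ms) \<subseteq> span (U \<union> W')"
    using ms_W' span_superset[of "U \<union> W'"] by blast
  ultimately have "span (U \<union> \<Union> (set ms)) = span (U \<union> W')"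
    unfolding span_eq by blast
  also have "\<dots> = W"
    using span_Un_orthogonal_complement[OF sU W U(1)] unfolding W'_def .
  finally show "span (\<Union> (set (U # ms))) = W"
    by simp
qed

locale orthogonal_maps =
  fixes G :: "('a::euclidean_space \<Rightarrow> 'a) set"
  assumes orthogonal_group: "A \<in> G \<Longrightarrow> linear A \<and> bij A \<and> inv A \<in> G \<and> (\<forall>x y. A x \<bullet> A y = x \<bullet> y)"
begin

lemma inner_apply_inv:
  assumes "A \<in> G"
  shows "A x \<bullet> y = x \<bullet> inv A y"
proof -
  have "A x \<bullet> y = A x \<bullet> A (inv A y)"
    using orthogonal_group[OF assms] by (simp add: bij_is_surj surj_f_inv_f)
  also have "\<dots> = x \<bullet> inv A y"
    using orthogonal_group[OF assms] by blast
  finally show ?thesis .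
qed

end

locale equivariant_symmetric_operator = orthogonal_maps G for G :: "('a::euclidean_space \<Rightarrow> 'a) set" +
  fixes v :: "'a \<Rightarrow> 'a"
  assumes linear_v: "linear v"
    and v_symmetric: "v x \<bullet> y = x \<bullet> v y"
    and v_commute: "A \<in> G \<Longrightarrow> v (A x) = A (v x)"
begin

lemma invariant_eigenspace:
  assumes "subspace W" "\<forall>A\<in>G. A ` W \<subseteq> W"
  shows "subspace {x\<in>W. v x = c *\<^sub>R x}" "\<forall>A\<in>G. A ` {x\<in>W. v x = c *\<^sub>R x} \<subseteq> {x\<in>W. v x = c *\<^sub>R x}"
proof -
  show "subspace {x\<in>W. v x = c *\<^sub>R x}"
    using assms(1) linear_v unfolding subspace_def
    by (auto simp: linear_add linear_scale linear_0 scaleR_add_right)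
  have "A x \<in> W \<and> v (A x) = c *\<^sub>R A x" if "A \<in> G" "x \<in> W" "v x = c *\<^sub>R x" for A x
    using that assms(2) v_commute[OF that(1)] linear_scale[of A] orthogonal_group[OF that(1)] by auto
  then show "\<forall>A\<in>G. A ` {x\<in>W. v x = c *\<^sub>R x} \<subseteq> {x\<in>W. v x = c *\<^sub>R x}"
    by blast
qed

lemma invariant_orthogonal_complement:
  assumes "subspace W" "\<forall>A\<in>G. A ` W \<subseteq> W" "\<forall>x\<in>W. v x \<in> W"
    and "\<forall>A\<in>G. A ` U \<subseteq> U" "\<forall>u\<in>U. v u \<in> U"
  defines "W' \<equiv> {x\<in>W. \<forall>u\<in>U. x \<bullet> u = 0}"
  shows "subspace W'" "\<forall>A\<in>G. A ` W' \<subseteq> W'" "\<forall>x\<in>W'. v x \<in> W'"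
proof -
  show "subspace W'"
    using assms(1) unfolding W'_def subspace_def by (auto simp: inner_add_left)
  have "A x \<in> W'" if "A \<in> G" "x \<in> W'" for A x
  proof -
    have "inv A u \<in> U" if "u \<in> U" for u
      using assms(4) orthogonal_group \<open>A \<in> G\<close> that by blast
    then show ?thesis
      using that assms(2) unfolding W'_def by (auto simp: inner_apply_inv)
  qed
  then show "\<forall>A\<in>G. A ` W' \<subseteq> W'"
    by blast
  show "\<forall>x\<in>W'. v x \<in> W'"
    using assms(3,5) unfolding W'_def by (simp add: v_symmetric)
qed

lemma ex_irreducible_eigen_subspace:
  assumes W: "subspace W" "W \<noteq> {0}" "\<forall>A\<in>G. A ` W \<subseteq> W" "\<forall>x\<in>W. v x \<in> W"
  shows "\<exists>U\<subseteq>W. adH_irreducible G U \<and> (\<exists>c. \<forall>x\<in>U. v x = c *\<^sub>R x)"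
proof -
  obtain x0 c where x0: "x0 \<in> W" "x0 \<noteq> 0" "v x0 = c *\<^sub>R x0"
    using symmetric_operator_has_eigenvector[OF linear_v v_symmetric W(1,2,4)] by blast
  define E where "E = {x\<in>W. v x = c *\<^sub>R x}"
  define P where "P U \<longleftrightarrow> subspace U \<and> U \<subseteq> E \<and> U \<noteq> {0} \<and> (\<forall>A\<in>G. A ` U \<subseteq> U)" for U
  have "P E"
    using invariant_eigenspace[OF W(1,3)] x0 unfolding P_def E_def by auto
  then obtain U where U: "P U" and minimal: "\<And>U'. P U' \<Longrightarrow> dim U \<le> dim U'"
    using ex_has_least_nat[of P E dim] by blast
  have "adH_irreducible G U"
    unfolding adH_irreducible_def
  proof (intro conjI allI impI)
    fix U' assume U': "subspace U' \<and> U' \<subseteq> U \<and> (\<forall>A\<in>G. A ` U' \<subseteq> U')"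
    show "U' = {0} \<or> U' = U"
    proof (cases "U' = {0}")
      case False
      then have "P U'"
        using U U' unfolding P_def by auto
      then show ?thesis
        using minimal subspace_dim_equal[of U' U] U U' unfolding P_def by auto
    qed simp
  qed (use U in \<open>auto simp: P_def\<close>)
  moreover have "U \<subseteq> W" "\<forall>x\<in>U. v x = c *\<^sub>R x"
    using U unfolding P_def E_def by auto
  ultimately show ?thesis
    by blast
qed

lemma eigen_decomposition_exists:
  assumes "subspace W" "\<forall>A\<in>G. A ` W \<subseteq> W" "\<forall>x\<in>W. v x \<in> W"
  shows "\<exists>ms. eigen_decomposition G v W ms"
  using assms
proof (induction "dim W" arbitrary: W rule: less_induct)
  case less
  show ?case
  proof (cases "W = {0}")
    case True
    then have "eigen_decomposition G v W []"
      by (simp add: eigen_decomposition_def orthogonal_blocks_def)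
    then show ?thesis ..
  next
    case False
    obtain U c where U: "U \<subseteq> W" "adH_irreducible G U" "\<forall>x\<in>U. v x = c *\<^sub>R x"
      using ex_irreducible_eigen_subspace[OF less.prems(1) False less.prems(2,3)] by blast
    have sU: "subspace U" and GU: "\<forall>A\<in>G. A ` U \<subseteq> U" and "U \<noteq> {0}"
      using U(2) unfolding adH_irreducible_def by auto
    have vU: "\<forall>u\<in>U. v u \<in> U"
      using U(3) sU by (simp add: subspace_scale)
    define W' where "W' = {x\<in>W. \<forall>u\<in>U. x \<bullet> u = 0}"
    note W' = invariant_orthogonal_complement[OF less.prems GU vU, folded W'_def]
    obtain u where "u \<in> U" "u \<noteq> 0"
      using \<open>U \<noteq> {0}\<close> sU subspace_0 by blast
    then have "u \<notin> W'"
      unfolding W'_def by (auto intro!: bexI[of _ u])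
    then have "W' \<subset> W"
      using \<open>u \<in> U\<close> U(1) unfolding W'_def by blast
    moreover have "span W' = W'" "span W = W"
      using W'(1) less.prems(1) by simp_all
    ultimately have "dim W' < dim W"
      using dim_psubset[of W' W] by argo
    then obtain ms' where ms': "eigen_decomposition G v W' ms'"
      using less.hyps[OF _ W'] by blast
    have "eigen_decomposition G v W (U # ms')"
      using eigen_decomposition_Cons[OF less.prems(1) U ms'[unfolded W'_def]] .
    then show ?thesis ..
  qed
qed

end

lemma good_decomp_iff_eigen_decomposition:
  "good_decomp h G v ms \<longleftrightarrow> eigen_decomposition G v (mspace h) ms"
  unfolding good_decomp_def decomp_def eigen_decomposition_def orthogonal_blocks_def
  by (auto simp: all_set_conv_all_nth)

section \<open>Positivity of bracket sums\<close>

lemma adapted_onb_exists: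
  fixes ms :: "'a::euclidean_space set list"
  assumes "\<forall>i<length ms. subspace (ms ! i)"
  shows "\<exists>B. adapted_onb ms B"
proof -
  have "\<exists>B. finite B \<and> B \<subseteq> ms ! i \<and> span B = ms ! i \<and> pairwise orthogonal B \<and> (\<forall>b\<in>B. norm b = 1)"
    if "i < length ms" for i
    using orthonormal_basis_subspace[of "ms ! i"] assms that independent_imp_finite by metis
  then show ?thesis
    unfolding adapted_onb_def by metis
qed

lemma bracket_sum_pos:
  fixes br :: "'a::euclidean_space \<Rightarrow> 'a \<Rightarrow> 'a"
  assumes br: "bilinear br" and blocks: "\<forall>i<length ms. subspace (ms ! i)"
    and idx: "c1 \<in> I1" "c2 \<in> I2" "c3 \<in> I3" "c1 < length ms" "c2 < length ms" "c3 < length ms"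
    and xyz: "x \<in> ms ! c1" "y \<in> ms ! c2" "z \<in> ms ! c3" "br x y \<bullet> z \<noteq> 0"
  shows "bracket_sum br ms I1 I2 I3 > 0"
proof -
  define B where "B = (SOME B. adapted_onb ms B)"
  have "adapted_onb ms B"
    unfolding B_def using someI_ex[OF adapted_onb_exists[OF blocks]] .
  then have B: "finite (B i)" "span (B i) = ms ! i" if "i < length ms" for i
    using that unfolding adapted_onb_def by blast+
  have "\<exists>a\<in>B c1. \<exists>b\<in>B c2. \<exists>c\<in>B c3. br a b \<bullet> c \<noteq> 0"
  proof (rule ccontr)
    assume "\<not> ?thesis"
    moreover have "bilinear (\<lambda>a b. br a b \<bullet> c)" for c
      using br unfolding bilinear_def
      by (simp add: linear_compose[of _ "\<lambda>u. u \<bullet> c", unfolded o_def]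
          bounded_linear.linear[OF bounded_linear_inner_left])
    moreover have "bilinear (\<lambda>a b. 0 :: real)"
      by (simp add: bilinear_def linear_zero)
    ultimately have "br x y \<bullet> c = 0" if "c \<in> B c3" for c
      using bilinear_eq[of "\<lambda>a b. br a b \<bullet> c" "\<lambda>a b. 0" "ms ! c1" "B c1" "ms ! c2" "B c2" x y]
        B(2) idx xyz(1,2) that by auto
    then have "br x y \<bullet> z = 0"
      using linear_eq_0_on_span[of "\<lambda>u. br x y \<bullet> u", OF _ _ xyz(3)[folded B(2)[OF idx(6)]]]
        bounded_linear.linear[OF bounded_linear_inner_right] by blast
    with xyz(4) show False ..
  qed
  then obtain a b c where abc: "a \<in> B c1" "b \<in> B c2" "c \<in> B c3" "br a b \<bullet> c \<noteq> 0"
    by blast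
  let ?T = "\<lambda>i j k. \<Sum>a\<in>B i. \<Sum>b\<in>B j. \<Sum>c\<in>B k. (br a b \<bullet> c)\<^sup>2"
  have "0 < (br a b \<bullet> c)\<^sup>2"
    using abc(4) by simp
  also have "\<dots> \<le> ?T c1 c2 c3"
    by (rule order_trans[OF _ member_le_sum[of a]], rule order_trans[OF _ member_le_sum[of b]],
        rule member_le_sum[of c]) (auto intro!: sum_nonneg simp: abc B(1) idx)
  also have "\<dots> \<le> bracket_sum br ms I1 I2 I3"
    unfolding bracket_sum_def Let_def B_def[symmetric]
    by (rule order_trans[OF _ member_le_sum[of c1]], rule order_trans[OF _ member_le_sum[of c2]],
        rule member_le_sum[of c3]) (auto intro!: sum_nonneg simp: idx)
  finally show ?thesis .
qed

section \<open>The metrics \<open>gamma v t\<close>\<close>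

locale homogeneous_space =
  fixes br :: "'g::euclidean_space \<Rightarrow> 'g \<Rightarrow> 'g" and h :: "'g set" and AdH :: "('g \<Rightarrow> 'g) set"
  assumes homog_data: "homog_data br h AdH"
begin

abbreviation m :: "'g set" where "m \<equiv> mspace h"

lemma lie_algebra: "lie_algebra_Q br"
  using homog_data unfolding homog_data_def by blast

lemma bilinear_br: "bilinear br"
  using lie_algebra unfolding lie_algebra_Q_def bilinear_def by blast

lemma br_antisym: "br x y = - br y x"
  using lie_algebra unfolding lie_algebra_Q_def by blast

lemma inner_br_assoc: "br x y \<bullet> z = x \<bullet> br y z"
  using lie_algebra unfolding lie_algebra_Q_def by blast

lemma inner_br_skew: "br x y \<bullet> z = - (br x z \<bullet> y)"
proof -
  have "br x y \<bullet> z = - (x \<bullet> br z y)"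
    using inner_br_assoc[of x y z] br_antisym[of y z] by simp
  also have "x \<bullet> br z y = br x z \<bullet> y"
    by (rule inner_br_assoc[symmetric])
  finally show ?thesis .
qed

lemma subspace_h: "subspace h"
  using homog_data unfolding homog_data_def by blast

lemma subspace_m: "subspace m"
  unfolding mspace_def subspace_def by (auto simp: inner_add_left)

sublocale orthogonal_maps AdH
  using homog_data unfolding homog_data_def by unfold_locales blast

lemma AdH_image_h: "A \<in> AdH \<Longrightarrow> A ` h = h"
  using homog_data unfolding homog_data_def by blast

lemma exp_ad_h_in_AdH: "X \<in> h \<Longrightarrow> op_exp (\<lambda>Y. s *\<^sub>R br X Y) \<in> AdH"
  using homog_data unfolding homog_data_def by blast

lemma AdH_m:
  assumes "A \<in> AdH" "x \<in> m"
  shows "A x \<in> m"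
proof -
  have "inv A y \<in> h" if "y \<in> h" for y
    using AdH_image_h orthogonal_group[OF assms(1)] that by blast
  then show ?thesis
    using assms(2) unfolding mspace_def by (simp add: inner_apply_inv[OF assms(1)])
qed

lemma h_orthogonal_m: "a \<in> h \<Longrightarrow> b \<in> m \<Longrightarrow> a \<bullet> b = 0"
  unfolding mspace_def by (simp add: inner_commute)

lemma h_m_decomposition:
  obtains a b where "a \<in> h" "b \<in> m" "x = a + b"
proof -
  obtain a b where ab: "a \<in> span h" "\<And>w. w \<in> span h \<Longrightarrow> orthogonal b w" "x = a + b"
    using orthogonal_subspace_decomp_exists[of h x] by blast
  have span_h: "span h = h"
    using subspace_h by simp
  have "a \<in> h"
    using ab(1) span_h by simp
  moreover have "b \<in> m"
    using ab(2) span_h unfolding mspace_def orthogonal_def by simp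
  ultimately show ?thesis
    using that ab(3) by blast
qed

lemma ad_apply: "ad br X y = br X y"
  unfolding ad_def by simp

lemma linear_ad: "linear (ad br X)"
  using bilinear_br unfolding ad_def bilinear_def by simp

lemma ad_uminus: "(\<lambda>z. - ad br X z) = ad br (- X)"
  using bilinear_lneg[OF bilinear_br] by (simp add: ad_def fun_eq_iff)

lemma inner_exp_ad: "op_exp (ad br X) y \<bullet> op_exp (ad br X) z = y \<bullet> z"
proof -
  have skew: "ad br X a \<bullet> b = a \<bullet> (\<lambda>z. - ad br X z) b" for a b
    using inner_br_skew[of X a b] by (simp add: ad_apply inner_commute)
  have "op_exp (ad br X) y \<bullet> op_exp (ad br X) z
      = y \<bullet> op_exp (\<lambda>z. - ad br X z) (op_exp (ad br X) z)"
    by (rule op_exp_adjoint[OF linear_ad linear_compose_neg[OF linear_ad] skew])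
  also have "\<dots> = y \<bullet> z"
    by (simp add: op_exp_uminus_cancel[OF linear_ad])
  finally show ?thesis .
qed

lemma inv_exp_ad: "inv (op_exp (ad br X)) = op_exp (ad br (- X))"
proof (rule inv_equality)
  show "op_exp (ad br (- X)) (op_exp (ad br X) x) = x" for x
    using op_exp_uminus_cancel[OF linear_ad] by (simp add: ad_uminus)
  show "op_exp (ad br X) (op_exp (ad br (- X)) y) = y" for y
    using op_exp_uminus_cancel[OF linear_ad, of "- X"] ad_uminus[of "- X"] by simp
qed

end

locale sigma_element = homogeneous_space br h AdH
  for br :: "'g::euclidean_space \<Rightarrow> 'g \<Rightarrow> 'g" and h AdH +
  fixes v :: "'g \<Rightarrow> 'g"
  assumes v_Sigma: "v \<in> Sigma_set h AdH"
begin

lemma linear_v: "linear v"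
  using v_Sigma unfolding Sigma_set_def by blast

lemma v_h: "x \<in> h \<Longrightarrow> v x = 0"
  using v_Sigma unfolding Sigma_set_def by blast

lemma v_eq_m_part: "a \<in> h \<Longrightarrow> v (a + b) = v b"
  by (simp add: linear_add[OF linear_v] v_h)

text \<open>\<open>v\<close> is an endomorphism of \<open>g\<close> vanishing on \<open>h\<close>; its symmetry and \<open>Ad(H)\<close>-equivariance,
  required on \<open>m\<close> only, extend to all of \<open>g\<close>.\<close>

lemma v_in_m: "v x \<in> m"
proof -
  obtain a b where "a \<in> h" "b \<in> m" "x = a + b"
    by (rule h_m_decomposition)
  then show ?thesis
    using v_Sigma v_eq_m_part unfolding Sigma_set_def by auto
qed

lemma v_symmetric: "v x \<bullet> y = x \<bullet> v y"
proof -
  obtain a b where ab: "a \<in> h" "b \<in> m" "x = a + b"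
    by (rule h_m_decomposition)
  obtain c d where cd: "c \<in> h" "d \<in> m" "y = c + d"
    by (rule h_m_decomposition)
  have "v x \<bullet> y = v b \<bullet> d"
    using ab cd v_eq_m_part h_orthogonal_m[OF cd(1) v_in_m] by (simp add: inner_add_right inner_commute)
  also have "\<dots> = b \<bullet> v d"
    using v_Sigma ab(2) cd(2) unfolding Sigma_set_def by blast
  also have "\<dots> = x \<bullet> v y"
    using ab cd v_eq_m_part h_orthogonal_m[OF ab(1) v_in_m] by (simp add: inner_add_left)
  finally show ?thesis .
qed

lemma v_commute:
  assumes "A \<in> AdH"
  shows "v (A x) = A (v x)"
proof -
  obtain a b where ab: "a \<in> h" "b \<in> m" "x = a + b"
    by (rule h_m_decomposition)
  have "A a \<in> h"
    using AdH_image_h[OF assms] ab(1) by blast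
  then have "v (A x) = v (A b)"
    using ab(3) linear_add[of A] orthogonal_group[OF assms] v_eq_m_part by simp
  also have "\<dots> = A (v b)"
    using v_Sigma assms ab(2) unfolding Sigma_set_def by blast
  also have "\<dots> = A (v x)"
    using ab v_eq_m_part by simp
  finally show ?thesis .
qed

sublocale equivariant_symmetric_operator AdH v
  by unfold_locales
    (simp_all add: linear_add[OF linear_v] linear_scale[OF linear_v] v_symmetric v_commute)

definition exp_tv :: "real \<Rightarrow> 'g \<Rightarrow> 'g" where
  "exp_tv t = op_exp (\<lambda>z. t *\<^sub>R v z)"

lemma gamma_eq_exp_tv: "gamma v t x y = exp_tv t x \<bullet> y"
  by (simp add: gamma_def exp_tv_def)

lemma linear_scaled_v: "linear (\<lambda>z. t *\<^sub>R v z)"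
  using linear_v by (simp add: linear_compose_scale_right)

lemma linear_exp_tv: "linear (exp_tv t)"
  unfolding exp_tv_def by (rule linear_op_exp[OF linear_scaled_v])

lemma exp_tv_symmetric: "exp_tv t x \<bullet> y = x \<bullet> exp_tv t y"
  unfolding exp_tv_def by (rule op_exp_adjoint[OF linear_scaled_v linear_scaled_v]) (simp add: v_symmetric)

lemma exp_tv_commute:
  assumes "A \<in> AdH"
  shows "exp_tv t (A x) = A (exp_tv t x)"
proof -
  have "linear A"
    using orthogonal_group[OF assms] by blast
  then show ?thesis
    unfolding exp_tv_def
    by (intro op_exp_commute_on[of _ A UNIV, symmetric])
      (auto simp: linear_scaled_v v_commute[OF assms] linear_scale)
qed

text \<open>Positivity: \<open>exp_tv t\<close> is the square of the symmetric invertible map \<open>exp_tv (t/2)\<close>.\<close>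

lemma exp_tv_pos:
  assumes "x \<noteq> 0"
  shows "exp_tv t x \<bullet> x > 0"
proof -
  let ?H = "\<lambda>y. (1/2) *\<^sub>R (t *\<^sub>R v y)"
  have lH: "linear ?H"
    using linear_scaled_v by (simp add: linear_compose_scale_right)
  have "exp_tv t x \<bullet> x = op_exp ?H (op_exp ?H x) \<bullet> x"
    unfolding exp_tv_def using op_exp_half_square[OF linear_scaled_v] by simp
  also have "\<dots> = op_exp ?H x \<bullet> op_exp ?H x"
    by (rule op_exp_adjoint[OF lH lH]) (simp add: v_symmetric)
  finally have "exp_tv t x \<bullet> x = op_exp ?H x \<bullet> op_exp ?H x" .
  moreover have "op_exp ?H x \<noteq> 0"
  proof
    assume "op_exp ?H x = 0"
    then have "op_exp (\<lambda>y. - ?H y) (op_exp ?H x) = 0"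
      using linear_0[OF linear_op_exp[OF linear_compose_neg[OF lH]]] by simp
    then show False
      using op_exp_uminus_cancel[OF lH, of x] assms by simp
  qed
  ultimately show ?thesis
    by simp
qed

lemma invariant_metric_gamma: "invariant_metric h AdH (gamma v t)"
  unfolding invariant_metric_def gamma_eq_exp_tv
proof (intro conjI ballI allI impI)
  fix x y z :: 'g and a b :: real
  show "exp_tv t (a *\<^sub>R x + b *\<^sub>R y) \<bullet> z = a * (exp_tv t x \<bullet> z) + b * (exp_tv t y \<bullet> z)"
    using linear_exp_tv[of t] by (simp add: linear_add linear_scale inner_add_left)
  show "exp_tv t x \<bullet> y = exp_tv t y \<bullet> x"
    using exp_tv_symmetric[of t x y] by (simp add: inner_commute)
next
  fix x :: 'g
  assume "x \<noteq> 0"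
  then show "exp_tv t x \<bullet> x > 0"
    by (rule exp_tv_pos)
next
  fix A x y
  assume "A \<in> AdH"
  then show "exp_tv t (A x) \<bullet> A y = exp_tv t x \<bullet> y"
    using exp_tv_commute orthogonal_group by simp
qed

lemma v_commute_br_h:
  assumes "X \<in> h"
  shows "v (br X Y) = br X (v Y)"
proof -
  have "v (op_exp (\<lambda>y. s *\<^sub>R br X y) x) = op_exp (\<lambda>y. s *\<^sub>R br X y) (v x)" for s x
    using v_commute[OF exp_ad_h_in_AdH[OF assms]] .
  then show ?thesis
    using commute_of_op_exp_commute[OF linear_ad[unfolded ad_def] linear_v] by blast
qed

lemma good_decomp_exists: "\<exists>ms. good_decomp h AdH v ms"
proof -
  have "\<forall>A\<in>AdH. A ` m \<subseteq> m"
    using AdH_m by blast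
  then show ?thesis
    unfolding good_decomp_iff_eigen_decomposition
    using eigen_decomposition_exists[OF subspace_m] v_in_m by blast
qed

text \<open>The good decomposition \<open>\<phi>\<close> of the paper. Condition \<open>W_Sigma\<close> quantifies over all good
  decompositions, so an arbitrary choice suffices.\<close>

definition phi :: "'g set list" where
  "phi = (SOME ms. good_decomp h AdH v ms)"

abbreviation eig :: "real list" where
  "eig \<equiv> eigvals h v"

abbreviation I :: "nat \<Rightarrow> nat set" where
  "I s \<equiv> Iset h v phi s"

lemma good_decomp_phi: "good_decomp h AdH v phi"
  unfolding phi_def using someI_ex[OF good_decomp_exists] .

lemma irreducible_block: "i < length phi \<Longrightarrow> adH_irreducible AdH (phi ! i)"
  using good_decomp_phi unfolding good_decomp_def decomp_def by blast

lemma subspace_block: "i < length phi \<Longrightarrow> subspace (phi ! i)"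
  using irreducible_block unfolding adH_irreducible_def by blast

lemma block_orthogonal:
  "i < length phi \<Longrightarrow> j < length phi \<Longrightarrow> i \<noteq> j \<Longrightarrow> x \<in> phi ! i \<Longrightarrow> y \<in> phi ! j \<Longrightarrow> x \<bullet> y = 0"
  using good_decomp_phi unfolding good_decomp_def decomp_def by blast

lemma span_blocks: "span (\<Union> (set phi)) = m"
  using good_decomp_phi unfolding good_decomp_def decomp_def by blast

lemma block_subset_m: "i < length phi \<Longrightarrow> phi ! i \<subseteq> m"
  using span_blocks span_superset[of "\<Union> (set phi)"] nth_mem by blast

lemma v_block:
  assumes "i < length phi" "x \<in> phi ! i"
  shows "v x = coef v phi i *\<^sub>R x"
proof -
  have "\<exists>c. \<forall>x\<in>phi ! i. v x = c *\<^sub>R x"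
    using good_decomp_phi assms(1) unfolding good_decomp_def by blast
  from someI_ex[OF this] show ?thesis
    using assms(2) unfolding coef_def by blast
qed

lemma zero_if_orthogonal_blocks:
  assumes "x \<in> m" "\<And>i z. i < length phi \<Longrightarrow> z \<in> phi ! i \<Longrightarrow> x \<bullet> z = 0"
  shows "x = 0"
proof -
  have "orthogonal x z" if "z \<in> \<Union> (set phi)" for z
    using assms(2) that by (auto simp: in_set_conv_nth orthogonal_def)
  then have "orthogonal x x"
    using orthogonal_to_span assms(1) span_blocks by blast
  then show ?thesis
    by (simp add: orthogonal_def)
qed

lemma eigenvalue_is_block_coef:
  assumes "x \<in> m" "x \<noteq> 0" "v x = c *\<^sub>R x"
  shows "\<exists>i<length phi. c = coef v phi i"
proof (rule ccontr)
  assume c: "\<not> ?thesis"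
  have "x \<bullet> z = 0" if i: "i < length phi" and z: "z \<in> phi ! i" for i z
  proof -
    have "c * (x \<bullet> z) = x \<bullet> v z"
      using assms(3) v_symmetric[of x z] by simp
    also have "\<dots> = coef v phi i * (x \<bullet> z)"
      using v_block[OF i z] by simp
    finally show ?thesis
      using c i by auto
  qed
  then show False
    using zero_if_orthogonal_blocks assms(1,2) by blast
qed

lemma set_eig: "set eig = {c. \<exists>x\<in>m. x \<noteq> 0 \<and> v x = c *\<^sub>R x}"
proof -
  have "{c. \<exists>x\<in>m. x \<noteq> 0 \<and> v x = c *\<^sub>R x} \<subseteq> (\<lambda>i. coef v phi i) ` {..<length phi}"
    using eigenvalue_is_block_coef by blast
  then have "finite {c. \<exists>x\<in>m. x \<noteq> 0 \<and> v x = c *\<^sub>R x}"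
    using finite_surj by blast
  then show ?thesis
    unfolding eigvals_def by simp
qed

lemma distinct_eig: "distinct eig"
  unfolding eigvals_def by simp

lemma Iset_D: "i \<in> I s \<Longrightarrow> i < length phi \<and> coef v phi i = eig ! s"
  unfolding Iset_def by blast

lemma block_in_some_Iset:
  assumes "i < length phi"
  shows "\<exists>s<length eig. i \<in> I s"
proof -
  obtain x where x: "x \<in> phi ! i" "x \<noteq> 0"
    using irreducible_block[OF assms] subspace_0 unfolding adH_irreducible_def by blast
  then have "coef v phi i \<in> set eig"
    unfolding set_eig using block_subset_m[OF assms] v_block[OF assms] by blast
  then obtain s where "s < length eig" "eig ! s = coef v phi i"
    by (metis in_set_conv_nth)
  then show ?thesis
    unfolding Iset_def using assms by auto
qed

end

section \<open>Flags adapted to \<open>v\<close>\<close>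

locale adapted_flag = sigma_element br h AdH v
  for br :: "'g::euclidean_space \<Rightarrow> 'g \<Rightarrow> 'g" and h AdH v +
  fixes ks :: "'g set list"
  assumes flag: "is_flag br h AdH ks"
    and v_W: "v \<in> W_Sigma br h AdH ks"
begin

lemma length_flag_le: "length ks \<le> length eig"
  using v_W unfolding W_Sigma_def by blast

lemma flag_first: "ks ! 0 = set_sum h (msum phi (I 0))"
  using v_W good_decomp_phi unfolding W_Sigma_def by blast

lemma flag_step: "0 < q \<Longrightarrow> q < length ks \<Longrightarrow> ks ! q = set_sum (ks ! (q - 1)) (msum phi (I q))"
  using v_W good_decomp_phi unfolding W_Sigma_def by auto

lemma bracket_condition:
  assumes "q < length ks" "q \<le> i" "q \<le> j" "q \<le> k" "i < length eig" "j < length eig" "k < length eig"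
    and "bracket_sum br phi (I i) (I j) (I k) > 0"
  shows "eig ! i - eig ! j - eig ! k + eig ! q \<le> 0"
  using v_W good_decomp_phi assms unfolding W_Sigma_def by blast

definition flag_generators :: "nat \<Rightarrow> 'g set" where
  "flag_generators q = h \<union> (\<Union>s\<in>{..q}. \<Union>i\<in>I s. phi ! i)"

lemma msum_Iset: "msum phi (I s) = span (\<Union>i\<in>I s. phi ! i)"
proof -
  have "I s \<inter> {..<length phi} = I s"
    unfolding Iset_def by auto
  then show ?thesis
    unfolding msum_def by simp
qed

lemma flag_eq_span: "q < length ks \<Longrightarrow> ks ! q = span (flag_generators q)"
proof (induction q)
  case 0
  have span_h: "span h = h"
    using subspace_h by simp
  show ?case
    using flag_first msum_Iset set_sum_span[of h, unfolded span_h] by (simp add: flag_generators_def)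
next
  case (Suc q)
  have "ks ! Suc q = set_sum (span (flag_generators q)) (span (\<Union>i\<in>I (Suc q). phi ! i))"
    using flag_step[of "Suc q"] Suc msum_Iset by simp
  also have "\<dots> = span (flag_generators (Suc q))"
    unfolding set_sum_span flag_generators_def atMost_Suc by (simp add: Un_ac)
  finally show ?case .
qed

end

locale flag_level = adapted_flag br h AdH v ks
  for br :: "'g::euclidean_space \<Rightarrow> 'g \<Rightarrow> 'g" and h AdH v ks +
  fixes q :: nat
  assumes q_lt: "q < length ks"
begin

abbreviation k :: "'g set" where
  "k \<equiv> ks ! q"

definition kperp :: "'g set" where
  "kperp = {y. \<forall>z\<in>k. y \<bullet> z = 0}"

lemma H_subalgebra_k: "H_subalgebra br h AdH k"
  using flag q_lt unfolding is_flag_def by blast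

lemma subspace_k: "subspace k"
  using H_subalgebra_k unfolding H_subalgebra_def by blast

lemma br_k: "x \<in> k \<Longrightarrow> y \<in> k \<Longrightarrow> br x y \<in> k"
  using H_subalgebra_k unfolding H_subalgebra_def by blast

lemma AdH_k: "A \<in> AdH \<Longrightarrow> x \<in> k \<Longrightarrow> A x \<in> k"
  using H_subalgebra_k unfolding H_subalgebra_def by blast

lemma h_subset_k: "h \<subseteq> k"
  using H_subalgebra_k unfolding H_subalgebra_def by blast

lemma k_eq_span: "k = span (flag_generators q)"
  using flag_eq_span[OF q_lt] .

lemma block_subset_k:
  assumes "s \<le> q" "i \<in> I s"
  shows "phi ! i \<subseteq> k"
proof -
  have "phi ! i \<subseteq> flag_generators q"
    using assms unfolding flag_generators_def by blast
  then show ?thesis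
    unfolding k_eq_span using span_superset by blast
qed

lemma v_k:
  assumes "x \<in> k"
  shows "v x \<in> k"
proof -
  have "x \<in> span (flag_generators q)"
    using assms k_eq_span by simp
  then show ?thesis
  proof (induction rule: span_induct)
    case base
    show ?case
      using linear_subspace_vimage[OF linear_v subspace_k] by (simp add: vimage_def)
  next
    case (step g)
    show ?case
    proof (cases "g \<in> h")
      case True
      then show ?thesis
        using v_h subspace_k subspace_0 by simp
    next
      case False
      then obtain s i where si: "s \<le> q" "i \<in> I s" "g \<in> phi ! i"
        using step unfolding flag_generators_def by blast
      have "v g = coef v phi i *\<^sub>R g"
        using v_block Iset_D[OF si(2)] si(3) by blast
      moreover have "g \<in> k"
        using block_subset_k[OF si(1,2)] si(3) by blast
      ultimately show ?thesis
        using subspace_k subspace_scale by simp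
    qed
  qed
qed

lemma subspace_kperp: "subspace kperp"
  unfolding kperp_def subspace_def by (auto simp: inner_add_left)

lemma kperp_orthogonal: "y \<in> kperp \<Longrightarrow> z \<in> k \<Longrightarrow> y \<bullet> z = 0" "y \<in> kperp \<Longrightarrow> z \<in> k \<Longrightarrow> z \<bullet> y = 0"
  unfolding kperp_def by (auto simp: inner_commute)

lemma kperp_subset_m: "kperp \<subseteq> m"
  using h_subset_k unfolding kperp_def mspace_def by blast

lemma v_kperp: "y \<in> kperp \<Longrightarrow> v y \<in> kperp"
  unfolding kperp_def using v_symmetric v_k by simp

lemma m_perp_eq_kperp: "m_perp h k = kperp"
proof
  show "m_perp h k \<subseteq> kperp"
  proof
    fix x
    assume x: "x \<in> m_perp h k"
    have "x \<bullet> z = 0" if z: "z \<in> k" for z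
    proof -
      obtain a b where ab: "a \<in> h" "b \<in> m" "z = a + b"
        by (rule h_m_decomposition)
      then have "b \<in> k"
        using z h_subset_k subspace_k subspace_diff[of k z a] by auto
      then have "x \<bullet> b = 0"
        using x ab(2) unfolding m_perp_def m_of_def by blast
      moreover have "x \<bullet> a = 0"
        using x ab(1) unfolding m_perp_def mspace_def by blast
      ultimately show ?thesis
        using ab(3) by (simp add: inner_add_right)
    qed
    then show "x \<in> kperp"
      unfolding kperp_def by blast
  qed
  show "kperp \<subseteq> m_perp h k"
    using kperp_subset_m kperp_orthogonal unfolding m_perp_def m_of_def by blast
qed

lemma br_k_kperp:
  assumes "X \<in> k" "Y \<in> kperp"
  shows "br X Y \<in> kperp"
proof -
  have "br X z \<bullet> Y = 0" if "z \<in> k" for z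
    using kperp_orthogonal(2)[OF assms(2) br_k[OF assms(1) that]] .
  then show ?thesis
    unfolding kperp_def using inner_br_skew[of X Y] by simp
qed

lemma block_subset_kperp:
  assumes "c \<in> I s" "q < s" "s < length eig"
  shows "phi ! c \<subseteq> kperp"
proof
  fix Z
  assume Z: "Z \<in> phi ! c"
  have c: "c < length phi" "coef v phi c = eig ! s"
    using Iset_D[OF assms(1)] by auto
  have "Z \<bullet> g = 0" if g: "g \<in> flag_generators q" for g
  proof (cases "g \<in> h")
    case True
    have "Z \<in> m"
      using block_subset_m[OF c(1)] Z by blast
    then show ?thesis
      using h_orthogonal_m[OF True] by (simp add: inner_commute)
  next
    case False
    then obtain s' a where a: "s' \<le> q" "a \<in> I s'" "g \<in> phi ! a"
      using g unfolding flag_generators_def by blast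
    have "a \<noteq> c"
    proof
      assume "a = c"
      then have "eig ! s' = eig ! s"
        using Iset_D[OF a(2)] c(2) by simp
      then show False
        using nth_eq_iff_index_eq[OF distinct_eig, of s' s] a(1) assms(2,3) by simp
    qed
    then show ?thesis
      using block_orthogonal c(1) Iset_D[OF a(2)] Z a(3) by blast
  qed
  then show "Z \<in> kperp"
    unfolding kperp_def k_eq_span using orthogonal_to_span unfolding orthogonal_def by blast
qed

text \<open>This is where condition (ii) of \<open>W_Sigma\<close> enters: a nonzero component of \<open>[X, Z]\<close> in a
  block of eigenvalue \<open>eig ! i'\<close> produces two positive bracket sums, whose inequalities force
  \<open>eig ! i' = eig ! i\<close>.\<close>

lemma v_br_block_eigen:
  assumes a: "s \<le> q" "a \<in> I s" "X \<in> phi ! a"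
    and c: "c \<in> I i" "q < i" "i < length eig" "Z \<in> phi ! c"
  shows "v (br X Z) = eig ! i *\<^sub>R br X Z"
proof -
  define W where "W = br X Z"
  have W: "W \<in> kperp"
    unfolding W_def using block_subset_k[OF a(1,2)] block_subset_kperp[OF c(1-3)] a(3) c(4)
    by (intro br_k_kperp) auto
  define U where "U = v W - eig ! i *\<^sub>R W"
  have "U \<in> m"
    unfolding U_def using v_in_m kperp_subset_m W subspace_m by (auto intro: subspace_diff subspace_scale)
  moreover have "U \<bullet> Z' = 0" if c': "c' < length phi" "Z' \<in> phi ! c'" for c' Z'
  proof -
    obtain i' where i': "i' < length eig" "c' \<in> I i'"
      using block_in_some_Iset[OF c'(1)] by blast
    have "U \<bullet> Z' = W \<bullet> v Z' - eig ! i * (W \<bullet> Z')"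
      unfolding U_def by (simp add: inner_diff_left v_symmetric)
    also have "v Z' = eig ! i' *\<^sub>R Z'"
      using v_block[OF c'] Iset_D[OF i'(2)] by simp
    finally have UZ': "U \<bullet> Z' = (eig ! i' - eig ! i) * (W \<bullet> Z')"
      by (simp add: algebra_simps)
    show ?thesis
    proof (cases "i' \<le> q \<or> W \<bullet> Z' = 0")
      case True
      then show ?thesis
        using UZ' block_subset_k[of i' c'] i'(2) c'(2) kperp_orthogonal(1)[OF W] by auto
    next
      case False
      have s: "s < length ks" "s < length eig"
        using a(1) q_lt length_flag_le by auto
      have Ia: "a < length phi" and Ic: "c < length phi"
        using Iset_D a(2) c(1) by auto
      have "br Z' Z \<bullet> X = Z' \<bullet> br Z X"
        by (rule inner_br_assoc)
      also have "br Z X = - W"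
        unfolding W_def by (rule br_antisym)
      finally have "br Z' Z \<bullet> X = - (W \<bullet> Z')"
        by (simp add: inner_commute)
      moreover have "br Z Z' \<bullet> X = - (br Z' Z \<bullet> X)"
        using br_antisym[of Z Z'] by simp
      moreover have blocks: "\<forall>i<length phi. subspace (phi ! i)"
        using subspace_block by blast
      ultimately have pos: "bracket_sum br phi (I i') (I i) (I s) > 0" "bracket_sum br phi (I i) (I i') (I s) > 0"
        using False by (auto intro!: bracket_sum_pos[OF bilinear_br blocks] i'(2) c(1,4) a(2,3) c' Ia Ic)
      have "q < i'"
        using False by simp
      then have "eig ! i' - eig ! i - eig ! s + eig ! s \<le> 0" "eig ! i - eig ! i' - eig ! s + eig ! s \<le> 0"
        using a(1) c(2) by (intro bracket_condition[OF s(1)] i'(1) c(3) s(2) pos; simp)+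
      then show ?thesis
        using UZ' by simp
    qed
  qed
  ultimately have "U = 0"
    by (rule zero_if_orthogonal_blocks)
  then show ?thesis
    unfolding U_def W_def by simp
qed

lemma v_commute_br_block:
  assumes "s \<le> q" "a \<in> I s" "X \<in> phi ! a" "Y \<in> kperp"
  shows "v (br X Y) = br X (v Y)"
proof -
  have X: "X \<in> k"
    using block_subset_k[OF assms(1,2)] assms(3) by blast
  define U where "U = v (br X Y) - br X (v Y)"
  have "U \<in> m"
    unfolding U_def using v_in_m kperp_subset_m br_k_kperp[OF X v_kperp[OF assms(4)]] subspace_m
    by (auto intro: subspace_diff)
  moreover have "U \<bullet> Z = 0" if c: "c < length phi" "Z \<in> phi ! c" for c Z
  proof -
    obtain i where i: "i < length eig" "c \<in> I i"
      using block_in_some_Iset[OF c(1)] by blast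
    have vZ: "v Z = eig ! i *\<^sub>R Z"
      using v_block[OF c] Iset_D[OF i(2)] by simp
    have "U \<bullet> Z = br X Y \<bullet> v Z - br X (v Y) \<bullet> Z"
      unfolding U_def by (simp add: inner_diff_left v_symmetric)
    also have "\<dots> = v (br X Z) \<bullet> Y - eig ! i * (br X Z \<bullet> Y)"
      using inner_br_skew[of X Y Z] inner_br_skew[of X "v Y" Z] v_symmetric[of "br X Z" Y] vZ by simp
    finally have UZ: "U \<bullet> Z = v (br X Z) \<bullet> Y - eig ! i * (br X Z \<bullet> Y)" .
    show ?thesis
    proof (cases "i \<le> q")
      case True
      have "br X Z \<in> k"
        using br_k[OF X] block_subset_k[OF True i(2)] c(2) by blast
      then show ?thesis
        using UZ v_k kperp_orthogonal(2)[OF assms(4)] by simp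
    next
      case False
      then show ?thesis
        using UZ v_br_block_eigen[OF assms(1-3) i(2) _ i(1) c(2)] by simp
    qed
  qed
  ultimately have "U = 0"
    by (rule zero_if_orthogonal_blocks)
  then show ?thesis
    unfolding U_def by simp
qed

lemma v_commute_br:
  assumes "X \<in> k" "Y \<in> kperp"
  shows "v (br X Y) = br X (v Y)"
proof -
  have "X \<in> span (flag_generators q)"
    using assms(1) k_eq_span by simp
  then have "\<forall>Y\<in>kperp. v (br X Y) = br X (v Y)"
  proof (induction rule: span_induct)
    case base
    show ?case
      unfolding subspace_def
      by (simp add: bilinear_lzero[OF bilinear_br] bilinear_ladd[OF bilinear_br]
          bilinear_lmul[OF bilinear_br] linear_add[OF linear_v] linear_scale[OF linear_v] linear_0[OF linear_v])
  next
    case (step g)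
    then show ?case
      using v_commute_br_h v_commute_br_block unfolding flag_generators_def by blast
  qed
  then show ?thesis
    using assms(2) by blast
qed

lemma exp_ad_kperp:
  assumes "X \<in> k" "y \<in> kperp"
  shows "op_exp (ad br X) y \<in> kperp"
  by (rule op_exp_in_subspace[OF linear_ad subspace_kperp _ assms(2)])
    (simp add: ad_apply br_k_kperp[OF assms(1)])

lemma exp_tv_kperp: "y \<in> kperp \<Longrightarrow> exp_tv t y \<in> kperp"
  unfolding exp_tv_def
  by (rule op_exp_in_subspace[OF linear_scaled_v subspace_kperp])
    (auto simp: v_kperp subspace_kperp subspace_scale)

lemma exp_tv_commute_exp_ad:
  assumes "X \<in> k" "y \<in> kperp"
  shows "exp_tv t (op_exp (ad br X) y) = op_exp (ad br X) (exp_tv t y)"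
proof -
  have "ad br X (exp_tv t x) = exp_tv t (ad br X x)" if "x \<in> kperp" for x
    unfolding exp_tv_def
  proof (rule op_exp_commute_on[OF linear_scaled_v linear_ad, where S=kperp and x=x])
    show "\<forall>x\<in>kperp. t *\<^sub>R v x \<in> kperp"
      using v_kperp subspace_kperp subspace_scale by blast
    show "\<forall>x\<in>kperp. ad br X (t *\<^sub>R v x) = t *\<^sub>R v (ad br X x)"
      unfolding ad_apply using v_commute_br[OF assms(1)] bilinear_rmul[OF bilinear_br] by simp
  qed (rule that)
  then show ?thesis
    unfolding exp_tv_def
    using op_exp_commute_on[OF linear_ad linear_exp_tv[unfolded exp_tv_def], where S=kperp and x=y]
      br_k_kperp[OF assms(1)] assms(2) by (simp add: ad_apply)
qed

definition kperp_compatible :: "real \<Rightarrow> ('g \<Rightarrow> 'g) \<Rightarrow> bool" where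
  "kperp_compatible t B \<longleftrightarrow>
     (\<forall>y\<in>kperp. B y \<in> kperp \<and> exp_tv t (B y) = B (exp_tv t y)) \<and> (\<forall>y z. B y \<bullet> B z = y \<bullet> z)"

lemma kperp_compatible_comp:
  "kperp_compatible t A \<Longrightarrow> kperp_compatible t B \<Longrightarrow> kperp_compatible t (A \<circ> B)"
  unfolding kperp_compatible_def by simp

lemma kperp_compatible_AdH: "A \<in> AdH \<Longrightarrow> kperp_compatible t A"
  unfolding kperp_compatible_def kperp_def
  using exp_tv_commute orthogonal_group inner_apply_inv AdH_k by simp

lemma kperp_compatible_exp_ad: "X \<in> k \<Longrightarrow> kperp_compatible t (op_exp (ad br X))"
  unfolding kperp_compatible_def using exp_ad_kperp exp_tv_commute_exp_ad inner_exp_ad by simp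

lemma kperp_compatible_AdK_generators:
  assumes "a \<in> AdH \<union> {op_exp (ad br X) |X. X \<in> k}"
  shows "kperp_compatible t a" "kperp_compatible t (inv a)"
proof -
  have "- X \<in> k" if "X \<in> k" for X
    using subspace_k subspace_neg that by blast
  then show "kperp_compatible t a" "kperp_compatible t (inv a)"
    using assms kperp_compatible_AdH kperp_compatible_exp_ad orthogonal_group inv_exp_ad by auto
qed

lemma kperp_compatible_AdK: "B \<in> AdK br AdH k \<Longrightarrow> kperp_compatible t B"
  unfolding AdK_def
proof (induction rule: gen_grp.induct)
  case gen_id
  then show ?case
    unfolding kperp_compatible_def by simp
qed (use kperp_compatible_AdK_generators kperp_compatible_comp in blast)+

lemma submersion_metric_gamma: "submersion_metric br h AdH k (gamma v t)"
  unfolding submersion_metric_def m_perp_eq_kperp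
proof (intro conjI ballI)
  show "invariant_metric h AdH (gamma v t)"
    by (rule invariant_metric_gamma)
next
  fix x y
  assume "x \<in> m_of h k" "y \<in> kperp"
  then show "gamma v t x y = 0"
    unfolding gamma_eq_exp_tv m_of_def
    using exp_tv_symmetric exp_tv_kperp kperp_orthogonal(2) by simp
next
  fix A y z
  assume "A \<in> AdK br AdH k" "y \<in> kperp" "z \<in> kperp"
  then show "gamma v t (A y) (A z) = gamma v t y z"
    using kperp_compatible_AdK[of A t] unfolding kperp_compatible_def gamma_eq_exp_tv by simp
qed

end

theorem mainTheorem10:
  fixes br :: "'g::euclidean_space \<Rightarrow> 'g \<Rightarrow> 'g"
    and h :: "'g set" and AdH :: "('g \<Rightarrow> 'g) set"
    and ks :: "'g set list" and v :: "'g \<Rightarrow> 'g"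
  assumes "homog_data br h AdH"
    and "is_flag br h AdH ks"
    and "v \<in> W_Sigma br h AdH ks"
  shows "\<forall>t::real. t > 0 \<longrightarrow> (\<forall>q<length ks. submersion_metric br h AdH (ks ! q) (gamma v t))"
proof (intro allI impI)
  fix t :: real and q
  assume "q < length ks"
  moreover have "v \<in> Sigma_set h AdH"
    using assms(3) unfolding W_Sigma_def by blast
  ultimately interpret flag_level br h AdH v ks q
    using assms by unfold_locales
  show "submersion_metric br h AdH (ks ! q) (gamma v t)"
    by (rule submersion_metric_gamma)
qed

end
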